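(* Let $M$ be a binary matroid and let $d=\dim P(M)$. If the base graph $G(M)$ has a vertex with exactly $d$ neighbours, then $P(M)$ is indecomposable.
   Context: A matroid is binary if it is representable over $\mathbb{F}_2$. For a matroid $N$ on $E=\{1,\dots,n\}$, $P(N)=\mathrm{conv}\{\sum_{i\in B}e_i : B \text{ a base of } N\}\subset\mathbb{R}^n$. The base graph $G(M)$ has the bases of $M$ as vertices, two bases adjacent iff their symmetric difference has exactly two elements (it is the 1-skeleton of $P(M)$). A matroid base polytope decomposition of $P(M)$ is an expression $P(M)=\bigcup_{i=1}^t P(M_i)$ with each $M_i$ a matroid on $E$ and $P(M_i)\cap P(M_j)$ a face of both $P(M_i)$ and $P(M_j)$ for all $i\neq j$. $P(M)$ is decomposable if it has such a decomposition with $t\ge 2$ and every $P(M_i)\neq P(M)$, and indecomposable otherwise. *)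

theory Defs
  imports "HOL-Analysis.Analysis" "HOL-Library.Z2"
begin

text \<open>A matroid on the finite ground set UNIV of a finite type 'n, given by its
  family of bases (base axioms: nonempty family, basis exchange).\<close>
definition matroid_bases :: "('n::finite) set set \<Rightarrow> bool" where
  "matroid_bases \<B> \<longleftrightarrow> \<B> \<noteq> {} \<and>
     (\<forall>B1\<in>\<B>. \<forall>B2\<in>\<B>. \<forall>x\<in>B1 - B2. \<exists>y\<in>B2 - B1. insert y (B1 - {x}) \<in> \<B>)"

definition indep_F2 :: "('n \<Rightarrow> nat \<Rightarrow> bit) \<Rightarrow> 'n set \<Rightarrow> bool" where
  "indep_F2 v I \<longleftrightarrow>
     (\<forall>c :: 'n \<Rightarrow> bit. (\<forall>k. (\<Sum>i\<in>I. c i * v i k) = 0) \<longrightarrow> (\<forall>i\<in>I. c i = 0))"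

definition binary_matroid :: "('n::finite) set set \<Rightarrow> bool" where
  "binary_matroid \<B> \<longleftrightarrow> matroid_bases \<B> \<and>
     (\<exists>v :: 'n \<Rightarrow> nat \<Rightarrow> bit. \<forall>B. B \<in> \<B> \<longleftrightarrow>
        (indep_F2 v B \<and> (\<forall>J. B \<subset> J \<longrightarrow> \<not> indep_F2 v J)))"

definition indicator_vec :: "('n::finite) set \<Rightarrow> real ^ 'n" where
  "indicator_vec B = (\<chi> i. if i \<in> B then 1 else 0)"

definition base_polytope :: "('n::finite) set set \<Rightarrow> (real ^ 'n) set" where
  "base_polytope \<B> = convex hull (indicator_vec ` \<B>)"

definition base_graph_nbrs :: "('n::finite) set set \<Rightarrow> 'n set \<Rightarrow> 'n set set" where
  "base_graph_nbrs \<B> B = {B' \<in> \<B>. card ((B - B') \<union> (B' - B)) = 2}"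

definition is_mbp_decomposition :: "('n::finite) set set \<Rightarrow> nat \<Rightarrow> (nat \<Rightarrow> 'n set set) \<Rightarrow> bool" where
  "is_mbp_decomposition \<B> t Ms \<longleftrightarrow>
     (\<forall>i<t. matroid_bases (Ms i)) \<and>
     base_polytope \<B> = (\<Union>i<t. base_polytope (Ms i)) \<and>
     (\<forall>i<t. \<forall>j<t. i \<noteq> j \<longrightarrow>
        (base_polytope (Ms i) \<inter> base_polytope (Ms j)) face_of base_polytope (Ms i) \<and>
        (base_polytope (Ms i) \<inter> base_polytope (Ms j)) face_of base_polytope (Ms j))"

definition decomposable :: "('n::finite) set set \<Rightarrow> bool" where
  "decomposable \<B> \<longleftrightarrow> (\<exists>t Ms. t \<ge> 2 \<and> is_mbp_decomposition \<B> t Ms \<and>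
     (\<forall>i<t. base_polytope (Ms i) \<noteq> base_polytope \<B>))"

end

theory Submission
  imports Defs "HOL-Library.Function_Algebras"
begin

(* Let exch be the exchange pairs (x,y) at B0 (B0 - x + y a base) and dirs the edge
   directions e_y - e_x of P(M) at the vertex e_B0, so |dirs| = |exch| = deg B0.
   Then, for a base B0 of degree d: by the representation, every exchange-closed set K meets
   all bases in equally many elements; hence every e_B - e_B0 lies in span dirs, so
   d <= dim dirs <= |dirs|, and the degree hypothesis forces dirs to be independent.
   Next, independence (no cycle in the exchange graph) plus binarity yields, for every base
   B <> B0, a "leaf" x in B0 - B with a unique partner u, and B - u + x is the only base
   B - u + y.  By induction on |B - B0|, a matroid M1 within M through B0 containing
   all neighbours of B0 is M, and P(M1) - e_B0 lies in the span of the directions towards the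
   neighbours of B0 in M1.  Finally, in a decomposition some piece P(M1) contains e_B0 and
   e_B0 + s (sum of dirs), s > 0; independence of dirs forces M1 to contain all neighbours of
   B0, hence M1 = M, contradicting properness. *)


section \<open>Linear algebra over GF(2)\<close>

definition scale_F2 :: "bit \<Rightarrow> (nat \<Rightarrow> bit) \<Rightarrow> (nat \<Rightarrow> bit)" where
  "scale_F2 c f = (\<lambda>k. c * f k)"

interpretation F2: vector_space scale_F2
  by unfold_locales (auto simp: scale_F2_def fun_eq_iff algebra_simps)

lemma sum_fun_apply: "(sum f I :: nat \<Rightarrow> bit) k = (\<Sum>i\<in>I. f i k)"
  by (induction I rule: infinite_finite_induct) auto

lemma bit_add_self [simp]: "(a::bit) + a = 0"
  by (cases a) auto

lemma indep_F2_inj_on: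
  fixes v :: "'n::finite \<Rightarrow> nat \<Rightarrow> bit"
  assumes ind: "indep_F2 v I"
  shows "inj_on v I"
proof (rule inj_onI, rule ccontr)
  fix i j assume ij: "i \<in> I" "j \<in> I" "v i = v j" "i \<noteq> j"
  define c where "c = (\<lambda>l. if l = i \<or> l = j then (1::bit) else 0)"
  have "(\<Sum>l\<in>I. c l * v l k) = 0" for k
  proof -
    have "(\<Sum>l\<in>I. c l * v l k) = (\<Sum>l\<in>{i,j}. c l * v l k)"
      by (rule sum.mono_neutral_right) (use ij in \<open>auto simp: c_def\<close>)
    also have "\<dots> = c i * v i k + c j * v j k"
      using ij(4) by (simp only: sum.insert_if finite.intros insert_iff empty_iff
          simp_thms if_False sum.empty add_0_right)
    also have "\<dots> = 0" using ij(3) by (simp only: c_def if_True simp_thms mult_1 bit_add_self)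
    finally show ?thesis .
  qed
  hence "c i = 0" using ind ij(1) unfolding indep_F2_def by blast
  thus False by (simp add: c_def)
qed

lemma indep_F2_iff:
  fixes v :: "'n::finite \<Rightarrow> nat \<Rightarrow> bit"
  shows "indep_F2 v I \<longleftrightarrow> inj_on v I \<and> F2.independent (v ` I)"
proof
  assume ind: "indep_F2 v I"
  have inj: "inj_on v I" using ind by (rule indep_F2_inj_on)
  have "\<not> F2.dependent (v ` I)"
  proof
    assume "F2.dependent (v ` I)"
    then obtain u where u: "\<exists>w\<in>v ` I. u w \<noteq> 0" "(\<Sum>w\<in>v ` I. scale_F2 (u w) w) = 0"
      using F2.dependent_finite[of "v ` I"] by auto
    have "(\<Sum>i\<in>I. scale_F2 (u (v i)) (v i)) = 0"
      using u(2) by (simp add: sum.reindex[OF inj])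
    hence "(\<Sum>i\<in>I. u (v i) * v i k) = 0" for k
      using sum_fun_apply[of "\<lambda>i. scale_F2 (u (v i)) (v i)" I k] by (simp add: scale_F2_def)
    hence "\<forall>i\<in>I. u (v i) = 0"
      using ind[unfolded indep_F2_def, rule_format, of "\<lambda>i. u (v i)"] by blast
    with u(1) show False by auto
  qed
  with inj show "inj_on v I \<and> F2.independent (v ` I)" by blast
next
  assume h: "inj_on v I \<and> F2.independent (v ` I)"
  show "indep_F2 v I" unfolding indep_F2_def
  proof (intro allI impI ballI)
    fix c :: "'n \<Rightarrow> bit" and i
    assume s: "\<forall>k. (\<Sum>i\<in>I. c i * v i k) = 0" and i: "i \<in> I"
    define u where "u = (\<lambda>w. c (the_inv_into I v w))"
    have "(\<Sum>w\<in>v ` I. scale_F2 (u w) w) = (\<Sum>i\<in>I. scale_F2 (c i) (v i))"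
      using h by (simp add: sum.reindex u_def the_inv_into_f_f)
    also have "\<dots> = 0"
      using s by (simp add: fun_eq_iff sum_fun_apply scale_F2_def)
    finally have "\<forall>w\<in>v ` I. u w = 0"
      using h F2.dependent_finite[of "v ` I"] by auto
    with i h show "c i = 0" by (auto simp: u_def the_inv_into_f_f)
  qed
qed

lemma indep_F2_mono: "indep_F2 v I \<Longrightarrow> J \<subseteq> I \<Longrightarrow> indep_F2 v (J::('n::finite) set)"
  unfolding indep_F2_iff by (meson F2.independent_mono image_mono inj_on_subset)


section \<open>Elementary matroid facts\<close>

lemma card_exchange:
  assumes "x \<in> B" "y \<notin> B"
  shows "card (insert y (B - {x})) = card (B::('n::finite) set)"
proof -
  have "card (insert y (B - {x})) = Suc (card B - 1)"
    using assms by (simp add: card_Diff_singleton)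
  moreover have "card B > 0" using assms(1) by (auto simp: card_gt_0_iff)
  ultimately show ?thesis by simp
qed

lemma card_diff_eq:
  assumes "card A = card (B::('n::finite) set)"
  shows "card (A - B) = card (B - A)"
  using assms by (simp add: card_Diff_subset_Int Int_commute)

lemma bases_card_eq:
  assumes M: "matroid_bases \<B>" and B2: "B2 \<in> \<B>"
  shows "B1 \<in> \<B> \<Longrightarrow> card B1 = card (B2::('n::finite) set)"
proof (induction "card (B1 - B2)" arbitrary: B1)
  case 0
  hence sub: "B1 \<subseteq> B2" by auto
  have "B2 \<subseteq> B1"
  proof
    fix x assume x: "x \<in> B2"
    show "x \<in> B1"
    proof (rule ccontr)
      assume "x \<notin> B1"
      with M B2 \<open>B1 \<in> \<B>\<close> x obtain y where "y \<in> B1 - B2" unfolding matroid_bases_def by blast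
      with sub show False by auto
    qed
  qed
  with sub show ?case by simp
next
  case (Suc n)
  then obtain x where x: "x \<in> B1 - B2" by (metis card.empty Zero_not_Suc ex_in_conv)
  then obtain y where y: "y \<in> B2 - B1" and B: "insert y (B1 - {x}) \<in> \<B>"
    using M B2 Suc.prems unfolding matroid_bases_def by blast
  have "insert y (B1 - {x}) - B2 = (B1 - B2) - {x}" using y by auto
  hence "n = card (insert y (B1 - {x}) - B2)" using Suc.hyps(2) x by simp
  from Suc.hyps(1)[OF this B] have "card (insert y (B1 - {x})) = card B2" .
  moreover have "card (insert y (B1 - {x})) = card B1" using x y by (intro card_exchange) auto
  ultimately show ?case by simp
qed


section \<open>Binary matroids: fundamental circuits\<close>

locale binary_rep =
  fixes \<B> :: "('n::finite) set set" and v :: "'n \<Rightarrow> nat \<Rightarrow> bit"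
  assumes matroid: "matroid_bases \<B>"
    and rep: "\<And>B. B \<in> \<B> \<longleftrightarrow> indep_F2 v B \<and> (\<forall>J. B \<subset> J \<longrightarrow> \<not> indep_F2 v J)"
begin

lemma base_indep: "B \<in> \<B> \<Longrightarrow> indep_F2 v B"
  using rep by blast

lemma indep_extends_to_base:
  assumes "indep_F2 v J"
  obtains B where "J \<subseteq> B" "B \<in> \<B>"
proof -
  let ?A = "{J'. J \<subseteq> J' \<and> indep_F2 v J'}"
  have "finite ?A" "?A \<noteq> {}" using assms by auto
  then obtain m where m: "m \<in> ?A" and max: "\<forall>b\<in>?A. m \<le> b \<longrightarrow> m = b"
    using finite_has_maximal[of ?A] by blast
  have "m \<in> \<B>"
    unfolding rep
  proof (intro conjI allI impI)
    show "indep_F2 v m" using m by simp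
  next
    fix K assume "m \<subset> K"
    thus "\<not> indep_F2 v K" using max m by auto
  qed
  with m that show ?thesis by blast
qed

lemma indep_card_le:
  assumes "indep_F2 v J" "B \<in> \<B>"
  shows "card J \<le> card B"
proof -
  obtain B' where "J \<subseteq> B'" "B' \<in> \<B>" using indep_extends_to_base[OF assms(1)] .
  thus ?thesis using bases_card_eq[OF matroid assms(2)] card_mono[of B' J] by simp
qed

lemma indep_card_base:
  assumes "indep_F2 v J" "B \<in> \<B>" "card J = card B"
  shows "J \<in> \<B>"
  unfolding rep
proof (intro conjI allI impI)
  fix K assume "J \<subset> K"
  hence "card J < card K" by (simp add: psubset_card_mono)
  thus "\<not> indep_F2 v K" using indep_card_le[of K B] assms by auto
qed (rule assms(1))

lemma in_span_base:
  assumes B: "B \<in> \<B>"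
  shows "v z \<in> F2.span (v ` B)"
proof (cases "v z \<in> v ` B")
  case True thus ?thesis by (simp add: F2.span_base)
next
  case nv: False
  hence "B \<subset> insert z B" by blast
  hence "\<not> indep_F2 v (insert z B)" using rep B by blast
  moreover have bi: "inj_on v B" "F2.independent (v ` B)"
    using base_indep[OF B] indep_F2_iff by auto
  moreover have "inj_on v (insert z B)" using bi(1) nv by (simp, blast)
  ultimately have "\<not> F2.independent (insert (v z) (v ` B))" using indep_F2_iff by fastforce
  with bi(2) nv show ?thesis using F2.independent_insert by auto
qed

lemma card_le_of_span:
  assumes "indep_F2 v I" "\<And>i. i \<in> I \<Longrightarrow> v i \<in> F2.span (v ` S)"
  shows "card I \<le> card S"
proof -
  have h: "inj_on v I" "F2.independent (v ` I)" using assms(1) indep_F2_iff by auto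
  have "card (v ` I) \<le> card (v ` S)"
    using F2.independent_span_bound[of "v ` S" "v ` I"] h assms(2) by auto
  also have "\<dots> \<le> card S" by (rule card_image_le) simp
  finally show ?thesis using card_image[OF h(1)] by simp
qed

lemma exchange_if_not_in_span:
  assumes B: "B \<in> \<B>" and x: "x \<in> B" and z: "z \<notin> B"
    and nsp: "v z \<notin> F2.span (v ` (B - {x}))"
  shows "insert z (B - {x}) \<in> \<B>"
proof (rule indep_card_base[OF _ B])
  have "indep_F2 v (B - {x})" by (rule indep_F2_mono[OF base_indep[OF B]]) auto
  hence bi: "inj_on v (B - {x})" "F2.independent (v ` (B - {x}))"
    by (simp_all add: indep_F2_iff)
  have "v z \<notin> v ` (B - {x})" using nsp F2.span_base[of "v z" "v ` (B - {x})"] by blast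
  hence "inj_on v (insert z (B - {x}))" using bi(1) z by simp
  moreover have "F2.independent (insert (v z) (v ` (B - {x})))"
    by (rule F2.independent_insertI[OF nsp bi(2)])
  ultimately show "indep_F2 v (insert z (B - {x}))" unfolding indep_F2_iff by simp
  show "card (insert z (B - {x})) = card B" using x z by (rule card_exchange)
qed

(* Fundamental circuit: over GF(2), v z is the sum of the v x for which B - x + z is a base;
   in particular it lies in their span. *)
lemma fundamental_circuit_span:
  assumes B: "B \<in> \<B>" and z: "z \<notin> B"
  shows "v z \<in> F2.span (v ` {x\<in>B. insert z (B - {x}) \<in> \<B>})"
proof -
  have bi: "inj_on v B" "F2.independent (v ` B)" using base_indep[OF B] indep_F2_iff by auto
  obtain u where "v z = (\<Sum>w\<in>v ` B. scale_F2 (u w) w)"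
    using in_span_base[OF B, of z] F2.span_finite[of "v ` B"] by auto
  then obtain c where vz: "v z = (\<Sum>x\<in>B. scale_F2 (c x) (v x))"
    by (simp add: sum.reindex[OF bi(1)])
  have exch: "insert z (B - {x}) \<in> \<B>" if x: "x \<in> B" "c x \<noteq> 0" for x
  proof (rule exchange_if_not_in_span[OF B x(1) z], rule notI)
    let ?S = "\<Sum>b\<in>B - {x}. scale_F2 (c b) (v b)"
    assume "v z \<in> F2.span (v ` (B - {x}))"
    moreover have "?S \<in> F2.span (v ` (B - {x}))"
      by (intro F2.span_sum F2.span_scale F2.span_base) auto
    moreover have "v z = scale_F2 (c x) (v x) + ?S"
      using vz sum.remove[of B x "\<lambda>b. scale_F2 (c b) (v b)"] x(1) by simp
    hence "v z = v x + ?S" using x(2) by simp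
    ultimately have "v x \<in> F2.span (v ` (B - {x}))"
      by (metis F2.span_diff add_diff_cancel_right')
    moreover have "v x \<notin> v ` (B - {x})" using bi(1) x(1) by (auto dest: inj_onD)
    moreover have "F2.independent (insert (v x) (v ` (B - {x})))"
      using bi(2) x(1) by (metis image_insert insert_Diff)
    ultimately show False using F2.independent_insert by auto
  qed
  show ?thesis unfolding vz
  proof (rule F2.span_sum)
    fix x assume "x \<in> B"
    thus "scale_F2 (c x) (v x) \<in> F2.span (v ` {x\<in>B. insert z (B - {x}) \<in> \<B>})"
      using exch by (cases "c x = 0") (auto intro!: F2.span_scale F2.span_base simp: F2.span_zero)
  qed
qed

end


section \<open>Geometry of indicator vectors\<close>

definition exch_dir :: "'n::finite \<Rightarrow> 'n \<Rightarrow> real ^ 'n" where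
  "exch_dir x y = indicator_vec {y} - indicator_vec {x}"

lemma indicator_exchange:
  assumes "x \<in> B" "y \<notin> B"
  shows "indicator_vec (insert y (B - {x})) = indicator_vec B + exch_dir x y"
  using assms by (auto simp: vec_eq_iff indicator_vec_def exch_dir_def)

lemma exch_dir_nth:
  "x \<noteq> y \<Longrightarrow> exch_dir x y $ i = (if i = y then 1 else if i = x then -1 else 0)"
  by (auto simp: exch_dir_def indicator_vec_def)

lemma exch_dir_inj:
  assumes "x \<noteq> y" "x' \<noteq> y'" "exch_dir x y = exch_dir x' y'"
  shows "x = x' \<and> y = y'"
proof -
  have "exch_dir x y $ y = 1" using assms(1) by (simp add: exch_dir_nth)
  hence "exch_dir x' y' $ y = 1" using assms(3) by simp
  hence "y = y'" by (simp add: exch_dir_nth[OF assms(2)] split: if_splits)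
  moreover have "exch_dir x y $ x = -1" using assms(1) by (simp add: exch_dir_nth)
  hence "exch_dir x' y' $ x = -1" using assms(3) by simp
  hence "x = x'" by (simp add: exch_dir_nth[OF assms(2)] split: if_splits)
  ultimately show ?thesis by simp
qed

lemma exch_dir_inj_on:
  assumes "\<forall>(x,y)\<in>P. x \<noteq> y"
  shows "inj_on (\<lambda>(x,y). exch_dir x y) P"
proof (rule inj_onI)
  fix p q assume pq: "p \<in> P" "q \<in> P" "(\<lambda>(x,y). exch_dir x y) p = (\<lambda>(x,y). exch_dir x y) q"
  obtain x y x' y' where "p = (x,y)" "q = (x',y')" by fastforce
  with pq assms show "p = q" using exch_dir_inj[of x y x' y'] by auto
qed

lemma inner_indicator_vec: "f \<bullet> indicator_vec S = (\<Sum>i\<in>S. f $ i)"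
proof -
  have "f \<bullet> indicator_vec S = (\<Sum>i\<in>UNIV. if i \<in> S then f $ i else 0)"
    by (simp add: inner_vec_def indicator_vec_def if_distrib cong: if_cong)
  also have "\<dots> = (\<Sum>i\<in>S. f $ i)" by (simp add: sum.If_cases)
  finally show ?thesis .
qed

lemma inner_exch_dir: "x \<noteq> y \<Longrightarrow> f \<bullet> exch_dir x y = f $ y - f $ x"
  by (simp add: exch_dir_def inner_diff_right inner_indicator_vec)

(* 0/1-vectors are vertices: an indicator vector in the hull of indicator vectors of F is
   one of them (separate it by the functional \<Sum>_{i\<in>B} x_i - \<Sum>_{i\<notin>B} x_i). *)
lemma indicator_in_hull_imp_mem:
  assumes "indicator_vec B \<in> convex hull (indicator_vec ` F)"
  shows "B \<in> (F::('n::finite) set set)"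
proof (rule ccontr)
  assume nB: "B \<notin> F"
  define w :: "real ^ 'n" where "w = (\<chi> i. if i \<in> B then 1 else -1)"
  have val: "w \<bullet> indicator_vec B' = real (card (B' \<inter> B)) - real (card (B' - B))" for B'
  proof -
    have "w \<bullet> indicator_vec B' = (\<Sum>i\<in>B' \<inter> B. w $ i) + (\<Sum>i\<in>B' - B. w $ i)"
      unfolding inner_indicator_vec by (rule sum.Int_Diff) simp
    thus ?thesis by (simp add: w_def)
  qed
  have "w \<bullet> indicator_vec B' < real (card B)" if "B' \<in> F" for B'
  proof -
    have "B' \<noteq> B" using that nB by auto
    hence "B' - B \<noteq> {} \<or> B' \<inter> B \<subset> B" by auto
    thus ?thesis using val[of B'] card_mono[of B "B' \<inter> B"] psubset_card_mono[of B "B' \<inter> B"]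
      by (fastforce simp: card_gt_0_iff)
  qed
  hence "convex hull (indicator_vec ` F) \<subseteq> {y. w \<bullet> y < real (card B)}"
    by (intro hull_minimal) (auto simp: convex_halfspace_lt)
  thus False using assms val[of B] by auto
qed

lemma bases_subset_of_polytope_subset:
  assumes "base_polytope M1 \<subseteq> base_polytope (\<B>::('n::finite) set set)"
  shows "M1 \<subseteq> \<B>"
  using assms indicator_in_hull_imp_mem unfolding base_polytope_def
  by (metis hull_inc image_eqI subset_iff)

(* Edge vectors of a graph with at least as many edges as vertices are linearly dependent:
   all edge vectors lie in the span of the |Z| - 1 vectors e_z - e_z0. *)
lemma edge_dirs_dependent:
  fixes P :: "('n::finite \<times> 'n) set"
  assumes Z: "Z \<noteq> {}" and P: "P \<subseteq> Z \<times> Z" "\<forall>(x,y)\<in>P. x \<noteq> y"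
    and ind: "independent ((\<lambda>(x,y). exch_dir x y) ` P)"
  shows "card P < card Z"
proof -
  obtain z0 where z0: "z0 \<in> Z" using Z by blast
  define G where "G = (\<lambda>z. indicator_vec {z} - indicator_vec {z0}) ` (Z - {z0})"
  have "card G \<le> card (Z - {z0})" unfolding G_def by (rule card_image_le) simp
  also have "\<dots> < card Z" using z0 by (intro card_Diff1_less) auto
  finally have cG: "card G < card Z" .
  have toz0: "indicator_vec {z} - indicator_vec {z0} \<in> span G" if "z \<in> Z" for z
    using that by (cases "z = z0") (auto simp: G_def span_zero intro: span_base)
  have "(\<lambda>(x,y). exch_dir x y) ` P \<subseteq> span G"
  proof clarify
    fix x y assume "(x,y) \<in> P"
    hence "(indicator_vec {y} - indicator_vec {z0}) - (indicator_vec {x} - indicator_vec {z0})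
             \<in> span G" using P toz0 span_diff by blast
    thus "exch_dir x y \<in> span G" by (simp add: exch_dir_def)
  qed
  hence "card ((\<lambda>(x,y). exch_dir x y) ` P) \<le> card G"
    using independent_span_bound[OF _ ind] by (simp add: G_def)
  thus ?thesis using cG card_image[OF exch_dir_inj_on[OF P(2)]] by simp
qed

lemma sum_by_values:
  fixes S :: "('n::finite) set" and g :: "'n \<Rightarrow> real"
  shows "(\<Sum>i\<in>S. g i) = (\<Sum>c\<in>g ` UNIV. c * real (card (S \<inter> {i. g i = c})))"
proof -
  have "(\<Sum>i\<in>S. g i) = (\<Sum>c\<in>g ` UNIV. (\<Sum>i\<in>{i\<in>S. g i = c}. g i))"
    by (rule sum.group[symmetric]) auto
  also have "\<dots> = (\<Sum>c\<in>g ` UNIV. c * real (card (S \<inter> {i. g i = c})))"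
    by (intro sum.cong refl) (simp add: Int_def conj_commute)
  finally show ?thesis .
qed


section \<open>A base whose degree equals the dimension\<close>

locale degree_eq_dim = binary_rep +
  fixes B0 :: "('n::finite) set"
  assumes B0: "B0 \<in> \<B>"
    and degree: "int (card (base_graph_nbrs \<B> B0)) = aff_dim (base_polytope \<B>)"
begin

definition exch :: "('n \<times> 'n) set" where
  "exch = {(x,y). x \<in> B0 \<and> y \<notin> B0 \<and> insert y (B0 - {x}) \<in> \<B>}"

definition dirs :: "(real ^ 'n) set" where
  "dirs = (\<lambda>(x,y). exch_dir x y) ` exch"

lemma card_base: "B \<in> \<B> \<Longrightarrow> card B = card B0"
  using bases_card_eq[OF matroid B0] by blast

lemma base_eq_B0: "B \<in> \<B> \<Longrightarrow> B - B0 = {} \<Longrightarrow> B = B0"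
  using card_base by (simp add: card_subset_eq Diff_eq_empty_iff)

lemma exch_ne: "(x,y) \<in> exch \<Longrightarrow> x \<noteq> y"
  unfolding exch_def by auto

lemma exch_dir_inj_exch: "inj_on (\<lambda>(x,y). exch_dir x y) exch"
  using exch_ne by (intro exch_dir_inj_on) auto

lemma exch_dir_mem_dirs: "(x,y) \<in> exch \<Longrightarrow> exch_dir x y \<in> dirs"
  unfolding dirs_def by force

lemma nbrs_eq: "base_graph_nbrs \<B> B0 = (\<lambda>(x,y). insert y (B0 - {x})) ` exch"
proof (intro set_eqI iffI)
  fix B assume "B \<in> base_graph_nbrs \<B> B0"
  hence B: "B \<in> \<B>" "card ((B0 - B) \<union> (B - B0)) = 2" unfolding base_graph_nbrs_def by auto
  have "card (B0 - B) = card (B - B0)" using card_diff_eq[of B0 B] card_base[OF B(1)] by simp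
  moreover have "card ((B0 - B) \<union> (B - B0)) = card (B0 - B) + card (B - B0)"
    by (rule card_Un_disjoint) auto
  ultimately have "card (B0 - B) = 1" "card (B - B0) = 1" using B(2) by auto
  then obtain x y where x: "B0 - B = {x}" and y: "B - B0 = {y}" by (metis card_1_singletonE)
  have Beq: "B = insert y (B0 - {x})"
  proof (rule set_eqI)
    fix z
    have "z \<in> B0 - B \<longleftrightarrow> z = x" "z \<in> B - B0 \<longleftrightarrow> z = y" using x y by auto
    thus "z \<in> B \<longleftrightarrow> z \<in> insert y (B0 - {x})" by auto
  qed
  have "(x,y) \<in> exch" unfolding exch_def using x y B(1) Beq by auto
  thus "B \<in> (\<lambda>(x,y). insert y (B0 - {x})) ` exch" by (rule image_eqI[rotated]) (simp add: Beq)
next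
  fix B assume "B \<in> (\<lambda>(x,y). insert y (B0 - {x})) ` exch"
  then obtain x y where xy: "x \<in> B0" "y \<notin> B0" "B \<in> \<B>" "B = insert y (B0 - {x})"
    unfolding exch_def by auto
  hence "(B0 - B) \<union> (B - B0) = {x, y}" "x \<noteq> y" by auto
  thus "B \<in> base_graph_nbrs \<B> B0" using xy unfolding base_graph_nbrs_def by simp
qed

lemma card_nbrs: "card (base_graph_nbrs \<B> B0) = card exch"
proof -
  have "inj_on (\<lambda>(x,y). insert y (B0 - {x})) exch"
  proof (rule inj_onI, clarsimp simp: exch_def)
    fix x y x' y'
    assume h: "x \<in> B0" "y \<notin> B0" "x' \<in> B0" "y' \<notin> B0"
      "insert y (B0 - {x}) = insert y' (B0 - {x'})"
    have "x = x'"
    proof (rule ccontr)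
      assume "x \<noteq> x'"
      hence "x' \<in> insert y (B0 - {x})" using h(3) by auto
      thus False using h by auto
    qed
    moreover have "y \<in> insert y' (B0 - {x'})" using h(5) by auto
    ultimately show "x = x' \<and> y = y'" using h(2) by auto
  qed
  thus ?thesis by (simp add: nbrs_eq card_image)
qed

lemma card_dirs: "card dirs = card exch"
  unfolding dirs_def using exch_dir_inj_exch by (simp add: card_image)

(* If K is closed under exchange at B0 (x \<in> K \<longleftrightarrow> y \<in> K for (x,y) \<in> exch), every base meets
   K in at most (hence, applying this to -K as well, exactly) |B0 \<inter> K| elements: by the
   fundamental circuits, v(B \<inter> K) lies in the span of v(B0 \<inter> K). *)
lemma closed_card_le:
  assumes K: "\<And>x y. (x,y) \<in> exch \<Longrightarrow> y \<in> K \<Longrightarrow> x \<in> K" and B: "B \<in> \<B>"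
  shows "card (B \<inter> K) \<le> card (B0 \<inter> K)"
proof (rule card_le_of_span)
  show "indep_F2 v (B \<inter> K)" by (rule indep_F2_mono[OF base_indep[OF B]]) auto
next
  fix i assume i: "i \<in> B \<inter> K"
  show "v i \<in> F2.span (v ` (B0 \<inter> K))"
  proof (cases "i \<in> B0")
    case True thus ?thesis using i by (intro F2.span_base) auto
  next
    case False
    have "{x\<in>B0. insert i (B0 - {x}) \<in> \<B>} \<subseteq> B0 \<inter> K"
      using K i False unfolding exch_def by auto
    hence "F2.span (v ` {x\<in>B0. insert i (B0 - {x}) \<in> \<B>}) \<subseteq> F2.span (v ` (B0 \<inter> K))"
      by (intro F2.span_mono image_mono)
    thus ?thesis using fundamental_circuit_span[OF B0 False] by blast
  qed
qed

lemma closed_card_eq: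
  assumes K: "\<And>x y. (x,y) \<in> exch \<Longrightarrow> y \<in> K \<longleftrightarrow> x \<in> K" and B: "B \<in> \<B>"
  shows "card (B \<inter> K) = card (B0 \<inter> K)"
proof -
  have "card (B \<inter> K) \<le> card (B0 \<inter> K)" using closed_card_le[OF _ B, of K] K by blast
  moreover have "card (B \<inter> - K) \<le> card (B0 \<inter> - K)" using closed_card_le[OF _ B, of "- K"] K by blast
  moreover have split: "card S = card (S \<inter> K) + card (S \<inter> - K)" for S :: "'n set"
    by (metis Diff_eq card_Int_Diff finite)
  ultimately show ?thesis using card_base[OF B] split[of B] split[of B0] by linarith
qed

(* The edge directions at e_B0 span all of P(M) - e_B0: a linear functional vanishing on
   dirs is constant on exchange-closed level sets, hence takes the same value on all bases. *)
lemma base_diff_in_span_dirs: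
  assumes B: "B \<in> \<B>"
  shows "indicator_vec B - indicator_vec B0 \<in> span dirs"
proof (rule ccontr)
  define z where "z = indicator_vec B - indicator_vec B0"
  assume "indicator_vec B - indicator_vec B0 \<notin> span dirs"
  hence "span dirs \<subset> span (insert z dirs)"
    using span_mono[of dirs "insert z dirs"] span_base[of z "insert z dirs"] by (auto simp: z_def)
  then obtain f where f: "f \<noteq> 0" "f \<in> span (insert z dirs)"
    and orth: "\<And>y. y \<in> span dirs \<Longrightarrow> orthogonal f y"
    using orthogonal_to_subspace_exists_gen by blast
  obtain k where k: "f - k *\<^sub>R z \<in> span dirs" using f(2) span_breakdown_eq by blast
  have "f \<bullet> f = k * (f \<bullet> z)"
    using orth[OF k] by (simp add: orthogonal_def inner_diff_right)
  hence fz: "f \<bullet> z \<noteq> 0" using f(1) by auto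
  have level: "f $ x = f $ y" if "(x,y) \<in> exch" for x y
    using orth[OF span_base[OF exch_dir_mem_dirs[OF that]]] inner_exch_dir[OF exch_ne[OF that]]
    by (simp add: orthogonal_def)
  have "card (B \<inter> {i. f $ i = c}) = card (B0 \<inter> {i. f $ i = c})" for c
    by (rule closed_card_eq[OF _ B]) (auto dest: level)
  hence "(\<Sum>i\<in>B. f $ i) = (\<Sum>i\<in>B0. f $ i)" by (simp add: sum_by_values[where g="\<lambda>i. f $ i"])
  hence "f \<bullet> z = 0" by (simp add: z_def inner_diff_right inner_indicator_vec)
  with fz show False by simp
qed

lemma aff_dim_le_dim_dirs: "aff_dim (base_polytope \<B>) \<le> int (dim dirs)"
proof -
  have "indicator_vec B0 \<in> affine hull (indicator_vec ` \<B>)"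
    using B0 by (intro hull_inc) auto
  hence "aff_dim (base_polytope \<B>)
           = int (dim ((\<lambda>x. x - indicator_vec B0) ` indicator_vec ` \<B>))"
    by (simp add: base_polytope_def aff_dim_convex_hull aff_dim_eq_dim_subtract)
  moreover have "(\<lambda>x. x - indicator_vec B0) ` indicator_vec ` \<B> \<subseteq> span dirs"
    using base_diff_in_span_dirs by auto
  ultimately show ?thesis using dim_mono[of _ dirs] by (simp add: dim_span)
qed

lemma dirs_independent: "independent dirs"
proof -
  have "card dirs \<le> dim dirs" using degree aff_dim_le_dim_dirs card_nbrs card_dirs by linarith
  moreover have "dim dirs \<le> card dirs" by (rule dim_le_card') (simp add: dirs_def)
  moreover have "finite dirs" by (simp add: dirs_def)
  ultimately show ?thesis using card_eq_dim[of dirs dirs] span_superset[of dirs] by simp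
qed

lemma dir_not_in_span_others:
  assumes "(x,y) \<in> exch"
  shows "exch_dir x y \<notin> span (dirs - {exch_dir x y})"
  using dirs_independent exch_dir_mem_dirs[OF assms] unfolding dependent_def by blast


section \<open>Leaves of the exchange graph between B0 and another base\<close>

lemma exchange_partner:
  assumes B: "B \<in> \<B>" and x: "x \<in> B0 - B"
  obtains y where "y \<in> B - B0" "(x,y) \<in> exch"
  using matroid B0 B x unfolding matroid_bases_def exch_def by blast

(* For B \<noteq> B0 some x \<in> B0 - B has exactly one exchange partner u in B - B0: otherwise the
   exchange graph on (B0 - B) \<union> (B - B0) has at least as many edges as vertices, and its
   edge directions would be dependent. *)
lemma leaf_exists:
  assumes B: "B \<in> \<B>" "B \<noteq> B0"
  obtains x u where "x \<in> B0 - B" "u \<in> B - B0" "(x,u) \<in> exch"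
    "\<forall>y\<in>B - B0. (x,y) \<in> exch \<longrightarrow> y = u"
proof (rule ccontr)
  note leaf = that
  assume no_leaf: "\<not> thesis"
  define X where "X = B0 - B"
  define N where "N x = {y \<in> B - B0. (x,y) \<in> exch}" for x
  have cXY: "card (B - B0) = card X"
    unfolding X_def using card_diff_eq[of B B0] card_base[OF B(1)] by simp
  hence X: "X \<noteq> {}" using base_eq_B0[OF B(1)] B(2) by auto
  have N2: "2 \<le> card (N x)" if x: "x \<in> X" for x
  proof (rule ccontr)
    assume "\<not> 2 \<le> card (N x)"
    hence "\<forall>a\<in>N x. \<forall>b\<in>N x. a = b" using card_le_Suc0_iff_eq[of "N x"] by simp
    moreover obtain y where "y \<in> B - B0" "(x,y) \<in> exch"
      using exchange_partner[OF B(1)] x unfolding X_def by blast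
    ultimately have "\<forall>z\<in>B - B0. (x,z) \<in> exch \<longrightarrow> z = y" unfolding N_def by blast
    thus False using leaf no_leaf x \<open>y \<in> B - B0\<close> \<open>(x,y) \<in> exch\<close> unfolding X_def by blast
  qed
  define P where "P = Sigma X N"
  have "2 * card X = (\<Sum>x\<in>X. 2)" by simp
  also have "\<dots> \<le> (\<Sum>x\<in>X. card (N x))" using N2 by (rule sum_mono)
  also have "\<dots> = card P" unfolding P_def by (rule card_SigmaI[symmetric]) auto
  finally have "2 * card X \<le> card P" .
  moreover have "card (X \<union> (B - B0)) = card X + card (B - B0)"
    by (rule card_Un_disjoint) (auto simp: X_def)
  ultimately have cP: "card (X \<union> (B - B0)) \<le> card P" using cXY by linarith
  have "independent ((\<lambda>(x,y). exch_dir x y) ` P)"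
    by (rule independent_mono[OF dirs_independent]) (auto simp: P_def N_def dirs_def)
  moreover have "P \<subseteq> (X \<union> (B - B0)) \<times> (X \<union> (B - B0))" "\<forall>(x,y)\<in>P. x \<noteq> y"
    unfolding P_def N_def X_def by auto
  ultimately have "card P < card (X \<union> (B - B0))"
    using edge_dirs_dependent[of "X \<union> (B - B0)" P] X by blast
  with cP show False by simp
qed

(* At a leaf (x,u), binarity forbids exchanging u against anything in B0 - B other than x:
   B - u + y would be spanned by B0 - x, which has rank one less. *)
lemma leaf_unique_exchange:
  assumes B: "B \<in> \<B>" and x: "x \<in> B0 - B" and u: "u \<in> B - B0"
    and leaf: "\<forall>y\<in>B - B0. (x,y) \<in> exch \<longrightarrow> y = u"
    and y: "y \<in> B0 - B" "y \<noteq> x"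
  shows "insert y (B - {u}) \<notin> \<B>"
proof
  assume S: "insert y (B - {u}) \<in> \<B>"
  have "card (insert y (B - {u})) \<le> card (B0 - {x})"
  proof (rule card_le_of_span[OF base_indep[OF S]])
    fix i assume i: "i \<in> insert y (B - {u})"
    show "v i \<in> F2.span (v ` (B0 - {x}))"
    proof (cases "i \<in> B0")
      case True
      thus ?thesis using i x y by (intro F2.span_base) auto
    next
      case False
      hence "{x'\<in>B0. insert i (B0 - {x'}) \<in> \<B>} \<subseteq> B0 - {x}"
        using leaf i y unfolding exch_def by auto
      hence "F2.span (v ` {x'\<in>B0. insert i (B0 - {x'}) \<in> \<B>}) \<subseteq> F2.span (v ` (B0 - {x}))"
        by (intro F2.span_mono image_mono)
      thus ?thesis using fundamental_circuit_span[OF B0 False] by blast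
    qed
  qed
  moreover have "card (insert y (B - {u})) = card B"
    using u y by (intro card_exchange) auto
  moreover have "card B = card B0" by (rule card_base[OF B])
  moreover have "card (B0 - {x}) < card B0" using x by (intro card_Diff1_less) auto
  ultimately show False by simp
qed

lemma leaf_step:
  assumes B: "B \<in> \<B>" "B \<noteq> B0"
  obtains x u where "x \<in> B0 - B" "u \<in> B - B0" "(x,u) \<in> exch"
    "\<forall>y\<in>B - B0. (x,y) \<in> exch \<longrightarrow> y = u"
    "\<forall>y\<in>B0 - B. insert y (B - {u}) \<in> \<B> \<longrightarrow> y = x"
    "card (insert x (B - {u}) - B0) < card (B - B0)"
proof -
  obtain x u where x: "x \<in> B0 - B" and u: "u \<in> B - B0" and xu: "(x,u) \<in> exch"
    and leaf: "\<forall>y\<in>B - B0. (x,y) \<in> exch \<longrightarrow> y = u"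
    using leaf_exists[OF B] by blast
  have "insert x (B - {u}) - B0 = (B - B0) - {u}" using x by auto
  moreover have "card ((B - B0) - {u}) < card (B - B0)" using u by (intro card_Diff1_less) auto
  ultimately have "card (insert x (B - {u}) - B0) < card (B - B0)" by simp
  thus ?thesis using that x u xu leaf leaf_unique_exchange[OF B(1) x u leaf] by blast
qed


section \<open>Submatroids through B0\<close>

definition dirs_in :: "('n set) set \<Rightarrow> (real ^ 'n) set" where
  "dirs_in M1 = (\<lambda>(x,y). exch_dir x y) ` {(x,y)\<in>exch. insert y (B0 - {x}) \<in> M1}"

lemma dirs_in_subset:
  assumes "(x,y) \<in> exch" "insert y (B0 - {x}) \<notin> M1"
  shows "dirs_in M1 \<subseteq> dirs - {exch_dir x y}"
proof
  fix d assume "d \<in> dirs_in M1"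
  then obtain x' y' where e: "(x',y') \<in> exch" "insert y' (B0 - {x'}) \<in> M1" "d = exch_dir x' y'"
    unfolding dirs_in_def by auto
  have "(x',y') \<noteq> (x,y)" using e(2) assms(2) by auto
  hence "d \<noteq> exch_dir x y" using e(3) exch_dir_inj[OF exch_ne[OF e(1)] exch_ne[OF assms(1)]] by auto
  thus "d \<in> dirs - {exch_dir x y}" using exch_dir_mem_dirs[OF e(1)] e(3) by simp
qed

lemma sub_base_diff_in_span:
  assumes M1: "matroid_bases M1" "M1 \<subseteq> \<B>" "B0 \<in> M1"
  shows "B \<in> M1 \<Longrightarrow> indicator_vec B - indicator_vec B0 \<in> span (dirs_in M1)"
proof (induction "card (B - B0)" arbitrary: B rule: less_induct)
  case less
  let ?T = "dirs_in M1"
  show ?case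
  proof (cases "B = B0")
    case True thus ?thesis by (simp add: span_zero)
  next
    case False
    have B: "B \<in> \<B>" using less.prems M1(2) by blast
    obtain x u where x: "x \<in> B0 - B" and u: "u \<in> B - B0" and xu: "(x,u) \<in> exch"
      and only_u: "\<forall>y\<in>B - B0. (x,y) \<in> exch \<longrightarrow> y = u"
      and only_x: "\<forall>y\<in>B0 - B. insert y (B - {u}) \<in> \<B> \<longrightarrow> y = x"
      and closer: "card (insert x (B - {u}) - B0) < card (B - B0)"
      using leaf_step[OF B False] by blast
    (* exchanging x out of B0 inside M1 must bring in u, the unique partner of x *)
    obtain y where y: "y \<in> B - B0" "insert y (B0 - {x}) \<in> M1"
      using M1(1,3) less.prems x unfolding matroid_bases_def by blast
    hence "(x,y) \<in> exch" using M1(2) x unfolding exch_def by blast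
    hence "insert u (B0 - {x}) \<in> M1" using only_u y by blast
    hence dir: "exch_dir x u \<in> span ?T"
      unfolding dirs_in_def by (intro span_base image_eqI[where x="(x,u)"]) (use xu in auto)
    (* exchanging u out of B inside M1 must bring in x *)
    obtain y' where y': "y' \<in> B0 - B" "insert y' (B - {u}) \<in> M1"
      using M1(1,3) less.prems u unfolding matroid_bases_def by blast
    hence "y' = x" using only_x M1(2) by blast
    hence "insert x (B - {u}) \<in> M1" using y'(2) by simp
    hence IH: "indicator_vec (insert x (B - {u})) - indicator_vec B0 \<in> span ?T"
      using less.hyps closer by blast
    have eqB: "indicator_vec B = indicator_vec (insert x (B - {u})) + exch_dir x u"
    proof -
      have "insert u (insert x (B - {u}) - {x}) = B" using x u by auto
      thus ?thesis using indicator_exchange[of x "insert x (B - {u})" u] x u by auto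
    qed
    have "indicator_vec B - indicator_vec B0
            = (indicator_vec (insert x (B - {u})) - indicator_vec B0) + exch_dir x u"
      unfolding eqB by (simp add: algebra_simps)
    thus ?thesis using span_add[OF IH dir] by (simp only:)
  qed
qed

lemma sub_with_all_nbrs:
  assumes M1: "matroid_bases M1" "M1 \<subseteq> \<B>" "B0 \<in> M1"
    and nbrs: "\<And>x y. (x,y) \<in> exch \<Longrightarrow> insert y (B0 - {x}) \<in> M1"
  shows "B \<in> \<B> \<Longrightarrow> B \<in> M1"
proof (induction "card (B - B0)" arbitrary: B rule: less_induct)
  case less
  show ?case
  proof (cases "B = B0")
    case True thus ?thesis using M1(3) by simp
  next
    case False
    obtain x u where x: "x \<in> B0 - B" and u: "u \<in> B - B0" and xu: "(x,u) \<in> exch"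
      and only_x: "\<forall>y\<in>B0 - B. insert y (B - {u}) \<in> \<B> \<longrightarrow> y = x"
      and closer: "card (insert x (B - {u}) - B0) < card (B - B0)"
      using leaf_step[OF less.prems False] by metis
    obtain y' where "y' \<in> B0 - B" "insert y' (B - {u}) \<in> \<B>"
      using matroid less.prems B0 u unfolding matroid_bases_def by blast
    hence B': "insert x (B - {u}) \<in> M1" using less.hyps closer only_x by blast
    (* exchange x out of B' against the neighbour B0 - x + u inside M1 *)
    have "x \<in> insert x (B - {u}) - insert u (B0 - {x})" using x u by auto
    then obtain y where y: "y \<in> insert u (B0 - {x}) - insert x (B - {u})"
      "insert y (insert x (B - {u}) - {x}) \<in> M1"
      using M1(1) B' nbrs[OF xu] unfolding matroid_bases_def by blast
    have "insert x (B - {u}) - {x} = B - {u}" using x by auto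
    hence y': "insert y (B - {u}) \<in> M1" using y(2) by simp
    have "y = u"
    proof (rule ccontr)
      assume "y \<noteq> u"
      hence "y \<in> B0 - B" "y \<noteq> x" using y(1) by auto
      thus False using only_x y' M1(2) by blast
    qed
    thus ?thesis using y' u by (simp add: insert_absorb)
  qed
qed


section \<open>Decompositions near the vertex e_B0\<close>

definition dir_sum :: "real ^ 'n" where
  "dir_sum = (\<Sum>e\<in>exch. (\<lambda>(x,y). exch_dir x y) e)"

(* e_B0 + s \<cdot> dir_sum is a convex combination of e_B0 and the barycentre of its neighbours. *)
lemma vertex_plus_dir_sum:
  assumes s: "0 \<le> s" "s * real (card exch) \<le> 1"
  shows "indicator_vec B0 + s *\<^sub>R dir_sum \<in> base_polytope \<B>"
proof (cases "exch = {}")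
  case True
  thus ?thesis using B0 unfolding base_polytope_def dir_sum_def by (simp add: hull_inc)
next
  case False
  let ?v0 = "indicator_vec B0" and ?n = "real (card exch)"
  have n: "?n > 0" using False by (simp add: card_gt_0_iff)
  define q where "q = (\<Sum>e\<in>exch. (1 / ?n) *\<^sub>R indicator_vec ((\<lambda>(x,y). insert y (B0 - {x})) e))"
  have cvx: "convex (base_polytope \<B>)" unfolding base_polytope_def by simp
  have qin: "q \<in> base_polytope \<B>"
    unfolding q_def
  proof (rule convex_sum[OF _ cvx])
    show "(\<Sum>e\<in>exch. 1 / ?n) = 1" using n False by simp
  next
    fix e assume "e \<in> exch"
    thus "indicator_vec ((\<lambda>(x,y). insert y (B0 - {x})) e) \<in> base_polytope \<B>"
      unfolding base_polytope_def exch_def by (auto intro: hull_inc)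
  qed auto
  have "q = (\<Sum>e\<in>exch. (1 / ?n) *\<^sub>R (?v0 + (\<lambda>(x,y). exch_dir x y) e))"
    unfolding q_def by (intro sum.cong refl) (auto simp: exch_def indicator_exchange)
  also have "\<dots> = (\<Sum>e\<in>exch. (1 / ?n) *\<^sub>R ?v0) + (1 / ?n) *\<^sub>R dir_sum"
    by (simp add: scaleR_add_right sum.distrib dir_sum_def scaleR_sum_right)
  also have "(\<Sum>e\<in>exch. (1 / ?n) *\<^sub>R ?v0) = (?n * (1 / ?n)) *\<^sub>R ?v0"
    by (simp only: sum_constant_scaleR scaleR_scaleR)
  finally have q: "q = ?v0 + (1 / ?n) *\<^sub>R dir_sum" using n False by simp
  have "(1 - s * ?n) *\<^sub>R ?v0 + (s * ?n) *\<^sub>R q \<in> base_polytope \<B>"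
    using cvx qin B0 s n unfolding convex_def base_polytope_def
    by (metis (no_types, lifting) diff_add_cancel diff_ge_0_iff_ge hull_inc imageI
        zero_le_mult_iff less_imp_le)
  moreover have "(1 - s * ?n) *\<^sub>R ?v0 + (s * ?n) *\<^sub>R q = ?v0 + s *\<^sub>R dir_sum"
    using n False unfolding q by (simp add: algebra_simps)
  ultimately show ?thesis by simp
qed

(* In a decomposition, some piece contains e_B0 together with a point e_B0 + s \<cdot> dir_sum,
   s > 0: the pieces avoiding e_B0 form a closed set at positive distance from e_B0. *)
lemma piece_near_vertex:
  assumes dec: "is_mbp_decomposition \<B> t Ms"
  obtains i s where "i < t" "s > 0" "indicator_vec B0 \<in> base_polytope (Ms i)"
    "indicator_vec B0 + s *\<^sub>R dir_sum \<in> base_polytope (Ms i)"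
proof -
  let ?v0 = "indicator_vec B0"
  define U where "U = (\<Union>i\<in>{i. i < t \<and> ?v0 \<notin> base_polytope (Ms i)}. base_polytope (Ms i))"
  have "compact U" unfolding U_def base_polytope_def
    by (intro compact_UN compact_convex_hull finite_imp_compact) auto
  moreover have "?v0 \<notin> U" unfolding U_def by blast
  ultimately obtain d where d: "d > 0" "\<And>x. x \<in> U \<Longrightarrow> d \<le> dist ?v0 x"
    using separate_point_closed compact_imp_closed by metis
  define s where "s = min (1 / (real (card exch) + 1)) (d / (norm dir_sum + 1))"
  have s: "s > 0" "s * real (card exch) \<le> 1" "s * norm dir_sum < d"
  proof -
    have nw: "norm dir_sum + 1 > 0" using norm_ge_zero[of dir_sum] by linarith
    show "s > 0" using d(1) nw by (simp add: s_def)
    have "s \<le> 1 / (real (card exch) + 1)" by (simp add: s_def)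
    hence "s * (real (card exch) + 1) \<le> 1" by (simp add: pos_le_divide_eq add_pos_nonneg)
    thus "s * real (card exch) \<le> 1" using \<open>s > 0\<close> by (simp add: algebra_simps)
    have "s \<le> d / (norm dir_sum + 1)" by (simp add: s_def)
    hence "s * (norm dir_sum + 1) \<le> d" by (simp only: pos_le_divide_eq[OF nw])
    thus "s * norm dir_sum < d" using \<open>s > 0\<close> by (simp add: algebra_simps)
  qed
  let ?p = "?v0 + s *\<^sub>R dir_sum"
  have "?p \<in> base_polytope \<B>" using vertex_plus_dir_sum s by simp
  moreover have "?p \<notin> U" using d(2)[of ?p] s by (auto simp: dist_norm)
  ultimately obtain i where "i < t" "?p \<in> base_polytope (Ms i)" "?v0 \<in> base_polytope (Ms i)"
    using dec unfolding is_mbp_decomposition_def U_def by blast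
  thus ?thesis using that s(1) by blast
qed

lemma dir_sum_not_in_span_others:
  assumes xy: "(x,y) \<in> exch"
  shows "dir_sum \<notin> span (dirs - {exch_dir x y})"
proof
  let ?a = "exch_dir x y" and ?R = "\<Sum>e\<in>exch - {(x,y)}. (\<lambda>(x,y). exch_dir x y) e"
  assume "dir_sum \<in> span (dirs - {?a})"
  moreover have "?R \<in> span (dirs - {?a})"
  proof (rule span_sum)
    fix e assume e: "e \<in> exch - {(x,y)}"
    obtain x' y' where "e = (x',y')" by (cases e)
    hence e': "e = (x',y')" "(x',y') \<in> exch" "(x',y') \<noteq> (x,y)" using e by auto
    hence "exch_dir x' y' \<noteq> ?a" using exch_dir_inj[OF exch_ne[OF e'(2)] exch_ne[OF xy]] by auto
    thus "(\<lambda>(x,y). exch_dir x y) e \<in> span (dirs - {?a})"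
      using exch_dir_mem_dirs[OF e'(2)] e'(1) by (simp add: span_base)
  qed
  moreover have "?a = dir_sum - ?R" unfolding dir_sum_def using xy by (simp add: sum.remove)
  ultimately have "?a \<in> span (dirs - {?a})" using span_diff by metis
  thus False using dir_not_in_span_others[OF xy] by blast
qed

lemma sub_polytope_in_span:
  assumes M1: "matroid_bases M1" "M1 \<subseteq> \<B>" "B0 \<in> M1"
    and p: "p \<in> base_polytope M1"
  shows "p - indicator_vec B0 \<in> span (dirs_in M1)"
proof -
  let ?v0 = "indicator_vec B0"
  have "p \<in> affine hull (indicator_vec ` M1)"
    using p convex_hull_subset_affine_hull unfolding base_polytope_def by blast
  moreover have "?v0 \<in> affine hull (indicator_vec ` M1)" using M1(3) by (intro hull_inc) simp
  ultimately obtain z where z: "z \<in> span ((+) (- ?v0) ` indicator_vec ` M1)" "p = ?v0 + z"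
    using affine_hull_span_gen by blast
  have "(+) (- ?v0) ` indicator_vec ` M1 \<subseteq> span (dirs_in M1)"
    using sub_base_diff_in_span[OF M1] by (auto simp: add.commute)
  hence "span ((+) (- ?v0) ` indicator_vec ` M1) \<subseteq> span (dirs_in M1)"
    by (rule span_minimal) (rule subspace_span)
  thus ?thesis using z by auto
qed

(* A submatroid through B0 whose polytope contains e_B0 + s \<cdot> dir_sum (s > 0) contains all
   neighbours of B0: otherwise dir_sum would lie in the span of dirs minus one direction. *)
lemma piece_contains_nbrs:
  assumes M1: "matroid_bases M1" "M1 \<subseteq> \<B>" "B0 \<in> M1"
    and s: "s > 0" and p: "indicator_vec B0 + s *\<^sub>R dir_sum \<in> base_polytope M1"
    and xy: "(x,y) \<in> exch"
  shows "insert y (B0 - {x}) \<in> M1"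
proof (rule ccontr)
  assume "insert y (B0 - {x}) \<notin> M1"
  hence sub: "span (dirs_in M1) \<subseteq> span (dirs - {exch_dir x y})"
    using dirs_in_subset[OF xy] by (intro span_mono)
  have "s *\<^sub>R dir_sum \<in> span (dirs_in M1)" using sub_polytope_in_span[OF M1 p] by simp
  hence "(1 / s) *\<^sub>R (s *\<^sub>R dir_sum) \<in> span (dirs - {exch_dir x y})" using sub span_mul by blast
  hence "dir_sum \<in> span (dirs - {exch_dir x y})" using s by simp
  thus False using dir_sum_not_in_span_others[OF xy] by blast
qed

lemma not_decomposable: "\<not> decomposable \<B>"
proof
  assume "decomposable \<B>"
  then obtain t Ms where dec: "is_mbp_decomposition \<B> t Ms"
    and proper: "\<forall>i<t. base_polytope (Ms i) \<noteq> base_polytope \<B>"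
    unfolding decomposable_def by blast
  obtain i s where i: "i < t" "s > 0" "indicator_vec B0 \<in> base_polytope (Ms i)"
    "indicator_vec B0 + s *\<^sub>R dir_sum \<in> base_polytope (Ms i)"
    using piece_near_vertex[OF dec] by blast
  have M1: "matroid_bases (Ms i)" using dec i(1) unfolding is_mbp_decomposition_def by blast
  have sub: "Ms i \<subseteq> \<B>"
    using dec i(1) unfolding is_mbp_decomposition_def by (intro bases_subset_of_polytope_subset) blast
  have "B0 \<in> Ms i" using i(3) unfolding base_polytope_def by (rule indicator_in_hull_imp_mem)
  hence "\<B> \<subseteq> Ms i" using sub_with_all_nbrs[OF M1 sub] piece_contains_nbrs[OF M1 sub _ i(2,4)] by blast
  thus False using sub proper i(1) by auto
qed

end


theorem corollary6:
  fixes \<B> :: "('n::finite) set set"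
  assumes "binary_matroid \<B>"
    and "\<exists>B\<in>\<B>. int (card (base_graph_nbrs \<B> B)) = aff_dim (base_polytope \<B>)"
  shows "\<not> decomposable \<B>"
proof -
  obtain v where "binary_rep \<B> v"
    using assms(1) unfolding binary_matroid_def binary_rep_def by blast
  moreover obtain B0 where "B0 \<in> \<B>" "int (card (base_graph_nbrs \<B> B0)) = aff_dim (base_polytope \<B>)"
    using assms(2) by blast
  ultimately have "degree_eq_dim \<B> v B0"
    by (simp add: degree_eq_dim_def degree_eq_dim_axioms_def)
  thus ?thesis by (rule degree_eq_dim.not_decomposable)
qed

end
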